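(* If $H$ is a generalized hexagonal system, then $\zeta'(H,x)=\sum_{h}\zeta(H-h,x)$, where the sum runs over all hexagons $h$ of $H$ and $\zeta'$ denotes the derivative with respect to $x$.
   Context: A generalized hexagonal system is a subgraph of a hexagonal system (a 2-connected finite plane graph in which every interior face is a regular hexagon of side length one); its hexagons are the 6-cycles of it that bound hexagonal faces of the hexagonal lattice. A Clar cover of $H$ is a spanning subgraph each of whose components is a hexagon of $H$ or a single edge. $z(H,k)$ is the number of Clar covers of $H$ with exactly $k$ hexagon components and $\zeta(H,x)=\sum_{k\ge0}z(H,k)x^k$ (the empty graph has exactly one Clar cover, with $0$ hexagons). $H-h$ denotes the graph obtained from $H$ by deleting the vertices of $h$. *)

theory Defs
  imports "HOL-Computational_Algebra.Formal_Power_Series"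
begin

text \<open>Vertices of the hexagonal lattice are modelled as integer points (i,j) of the
brick-wall drawing: (i,j)--(i+1,j) is always an edge, and (i,j)--(i,j+1) is an edge
iff i+j is even.  This plane graph is (as a plane graph, up to homeomorphism) the
hexagonal lattice; its bounded faces are exactly the hexagons indexed below.\<close>

type_synonym vtx = "int \<times> int"

definition lat_adj :: "vtx \<Rightarrow> vtx \<Rightarrow> bool" where
  "lat_adj u v \<longleftrightarrow>
     (snd u = snd v \<and> \<bar>fst u - fst v\<bar> = 1) \<or>
     (fst u = fst v \<and> \<bar>snd u - snd v\<bar> = 1 \<and> even (fst u + min (snd u) (snd v)))"

definition lat_edges :: "vtx set set" where
  "lat_edges = {{u, v} | u v. lat_adj u v}"

text \<open>Hexagonal faces of the lattice, indexed by their lower-left corner (i,j), i+j even.\<close>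

definition hex_face :: "vtx \<Rightarrow> bool" where
  "hex_face c \<longleftrightarrow> even (fst c + snd c)"

definition hex_verts :: "vtx \<Rightarrow> vtx set" where
  "hex_verts c = (case c of (i, j) \<Rightarrow>
     {(i, j), (i+1, j), (i+2, j), (i, j+1), (i+1, j+1), (i+2, j+1)})"

definition hex_edges :: "vtx \<Rightarrow> vtx set set" where
  "hex_edges c = (case c of (i, j) \<Rightarrow>
     {{(i, j), (i+1, j)}, {(i+1, j), (i+2, j)}, {(i+2, j), (i+2, j+1)},
      {(i+2, j+1), (i+1, j+1)}, {(i+1, j+1), (i, j+1)}, {(i, j+1), (i, j)}})"

text \<open>A generalized
hexagonal system is a (finite) subgraph of a hexagonal system; these are exactly the
finite subgraphs of the hexagonal lattice.\<close>

definition gen_hex_system :: "vtx set \<Rightarrow> vtx set set \<Rightarrow> bool" where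
  "gen_hex_system V E \<longleftrightarrow> finite V \<and> E \<subseteq> lat_edges \<and> (\<forall>e\<in>E. e \<subseteq> V)"

definition hexagons :: "vtx set \<Rightarrow> vtx set set \<Rightarrow> vtx set" where
  "hexagons V E = {c. hex_face c \<and> hex_verts c \<subseteq> V \<and> hex_edges c \<subseteq> E}"

definition del_verts_V :: "vtx set \<Rightarrow> vtx set \<Rightarrow> vtx set" where
  "del_verts_V V X = V - X"

definition del_verts_E :: "vtx set set \<Rightarrow> vtx set \<Rightarrow> vtx set set" where
  "del_verts_E E X = {e \<in> E. e \<inter> X = {}}"

text \<open>A Clar cover (spanning subgraph whose components are hexagons of H or single
edges) is represented by the pair (S, M) of its hexagon components S and its edge
components M.\<close>

definition clar_covers :: "vtx set \<Rightarrow> vtx set set \<Rightarrow> (vtx set \<times> vtx set set) set" where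
  "clar_covers V E = {(S, M).
     S \<subseteq> hexagons V E \<and> M \<subseteq> E \<and>
     (\<forall>c\<in>S. \<forall>d\<in>S. c \<noteq> d \<longrightarrow> hex_verts c \<inter> hex_verts d = {}) \<and>
     (\<forall>e\<in>M. \<forall>e'\<in>M. e \<noteq> e' \<longrightarrow> e \<inter> e' = {}) \<and>
     (\<forall>e\<in>M. \<forall>c\<in>S. e \<inter> hex_verts c = {}) \<and>
     V = (\<Union>c\<in>S. hex_verts c) \<union> \<Union>M}"

definition clar_z :: "vtx set \<Rightarrow> vtx set set \<Rightarrow> nat \<Rightarrow> nat" where
  "clar_z V E k = card {(S, M) \<in> clar_covers V E. card S = k}"

definition zeta :: "vtx set \<Rightarrow> vtx set set \<Rightarrow> int fps" where
  "zeta V E = Abs_fps (\<lambda>k. int (clar_z V E k))"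

end

theory Submission
  imports Defs
begin

text \<open>The coefficient of x^k in the derivative
is (k+1) z(H,k+1): it counts Clar covers with k+1 hexagons together with a marked hexagon
among them.  Grouping these pairs by the marked hexagon h, removing h from the cover is a
bijection onto the Clar covers of H - h with k hexagons, since the edges and the other
hexagons of the cover avoid the vertices of h.\<close>

lemma corner_in_hex_verts: "c \<in> hex_verts c"
  by (cases c) (simp add: hex_verts_def)

lemma hex_edges_subset_hex_verts: "e \<in> hex_edges c \<Longrightarrow> e \<subseteq> hex_verts c"
  by (cases c) (auto simp: hex_edges_def hex_verts_def)

lemma hexagons_subset: "hexagons V E \<subseteq> V"
  using corner_in_hex_verts by (auto simp: hexagons_def)

lemma finite_hexagons: "finite V \<Longrightarrow> finite (hexagons V E)"
  using hexagons_subset by (rule finite_subset)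

lemma finite_clar_covers:
  assumes "gen_hex_system V E"
  shows "finite (clar_covers V E)"
proof -
  have "finite V" and "E \<subseteq> Pow V"
    using assms by (auto simp: gen_hex_system_def)
  then have "finite (Pow (hexagons V E) \<times> Pow E)"
    by (meson finite_Pow_iff finite_SigmaI finite_hexagons finite_subset)
  then show ?thesis
    by (rule finite_subset[rotated]) (auto simp: clar_covers_def)
qed

lemma finite_clar_cover_hexagons:
  "finite V \<Longrightarrow> (S, M) \<in> clar_covers V E \<Longrightarrow> finite S"
  by (auto simp: clar_covers_def intro: finite_subset[OF _ finite_hexagons])

lemma mem_hexagons_del_verts:
  assumes "d \<in> hexagons V E" and "hex_verts d \<inter> X = {}"
  shows "d \<in> hexagons (del_verts_V V X) (del_verts_E E X)"
  using assms hex_edges_subset_hex_verts[of _ d]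
  by (fastforce simp: hexagons_def del_verts_V_def del_verts_E_def)

lemma clar_coversD:
  assumes "(S, M) \<in> clar_covers V E"
  shows "S \<subseteq> hexagons V E" and "M \<subseteq> E"
    and "\<forall>d\<in>S. \<forall>d'\<in>S. d \<noteq> d' \<longrightarrow> hex_verts d \<inter> hex_verts d' = {}"
    and "\<forall>e\<in>M. \<forall>e'\<in>M. e \<noteq> e' \<longrightarrow> e \<inter> e' = {}"
    and "\<forall>e\<in>M. \<forall>d\<in>S. e \<inter> hex_verts d = {}"
    and "V = (\<Union>d\<in>S. hex_verts d) \<union> \<Union>M"
  using assms unfolding clar_covers_def mem_Collect_eq case_prod_conv by argo+

lemma clar_cover_del_hexagon:
  assumes cov: "(S, M) \<in> clar_covers V E" and c: "c \<in> S"
  shows "(S - {c}, M) \<in> clar_covers (del_verts_V V (hex_verts c)) (del_verts_E E (hex_verts c))"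
proof -
  note S = clar_coversD(1)[OF cov] and S_disj = clar_coversD(3)[OF cov]
    and M_disj = clar_coversD(4)[OF cov] and SM_disj = clar_coversD(5)[OF cov]
  have "S - {c} \<subseteq> hexagons (del_verts_V V (hex_verts c)) (del_verts_E E (hex_verts c))"
    using S S_disj c by (blast intro: mem_hexagons_del_verts)
  moreover have "M \<subseteq> del_verts_E E (hex_verts c)"
    using clar_coversD(2)[OF cov] SM_disj c by (auto simp: del_verts_E_def)
  moreover have "del_verts_V V (hex_verts c) = (\<Union>d\<in>S - {c}. hex_verts d) \<union> \<Union>M"
    using S_disj SM_disj c unfolding clar_coversD(6)[OF cov] del_verts_V_def by blast
  ultimately show ?thesis
    using S_disj M_disj SM_disj by (simp add: clar_covers_def)
qed

lemma clar_cover_add_hexagon: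
  assumes c: "c \<in> hexagons V E"
    and cov: "(S, M) \<in> clar_covers (del_verts_V V (hex_verts c)) (del_verts_E E (hex_verts c))"
  shows "(insert c S, M) \<in> clar_covers V E"
proof -
  have S: "S \<subseteq> hexagons V E" and disj: "\<forall>d\<in>S. hex_verts d \<inter> hex_verts c = {}"
    using cov by (auto simp: clar_covers_def hexagons_def del_verts_V_def del_verts_E_def)
  have "V = (\<Union>d\<in>insert c S. hex_verts d) \<union> \<Union>M"
    using c cov by (auto simp: clar_covers_def hexagons_def del_verts_V_def)
  then show ?thesis
    using c cov S disj by (auto simp: clar_covers_def del_verts_E_def)
qed

lemma hexagon_notin_clar_cover_del:
  assumes "(S, M) \<in> clar_covers (del_verts_V V (hex_verts c)) (del_verts_E E (hex_verts c))"
  shows "c \<notin> S"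
  using assms corner_in_hex_verts[of c]
  by (auto simp: clar_covers_def hexagons_def del_verts_V_def)

definition clar_covers_sized :: "vtx set \<Rightarrow> vtx set set \<Rightarrow> nat \<Rightarrow> (vtx set \<times> vtx set set) set" where
  "clar_covers_sized V E k = {(S, M) \<in> clar_covers V E. card S = k}"

lemma clar_z_eq_card: "clar_z V E k = card (clar_covers_sized V E k)"
  by (simp add: clar_z_def clar_covers_sized_def)

lemma bij_betw_clar_covers_del_hexagon:
  assumes "c \<in> hexagons V E"
  shows "bij_betw (\<lambda>(S, M). (insert c S, M))
           (clar_covers (del_verts_V V (hex_verts c)) (del_verts_E E (hex_verts c)))
           {x \<in> clar_covers V E. c \<in> fst x}"
  by (rule bij_betw_byWitness[where f' = "\<lambda>(S, M). (S - {c}, M)"])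
    (auto simp: assms clar_cover_add_hexagon clar_cover_del_hexagon insert_absorb
      dest: hexagon_notin_clar_cover_del)

lemma card_clar_covers_containing_hexagon:
  assumes g: "gen_hex_system V E" and c: "c \<in> hexagons V E"
  shows "card {x \<in> clar_covers_sized V E (Suc k). c \<in> fst x}
       = clar_z (del_verts_V V (hex_verts c)) (del_verts_E E (hex_verts c)) k"
proof -
  let ?H' = "clar_covers (del_verts_V V (hex_verts c)) (del_verts_E E (hex_verts c))"
  have "finite (del_verts_V V (hex_verts c))"
    using g by (simp add: gen_hex_system_def del_verts_V_def)
  then have fin: "finite (fst x)" if "x \<in> ?H'" for x
    using that by (metis finite_clar_cover_hexagons prod.collapse)
  have "bij_betw (\<lambda>(S, M). (insert c S, M)) {x \<in> ?H'. card (fst x) = k}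
          {x \<in> {x \<in> clar_covers V E. c \<in> fst x}. card (fst x) = Suc k}"
    using bij_betw_clar_covers_del_hexagon[OF c]
  proof (rule bij_betw_Collect)
    fix x assume x: "x \<in> ?H'"
    obtain S M where "x = (S, M)" by fastforce
    moreover have "c \<notin> S"
      using x \<open>x = (S, M)\<close> by (auto dest: hexagon_notin_clar_cover_del)
    ultimately show "(card (fst ((\<lambda>(S, M). (insert c S, M)) x)) = Suc k) = (card (fst x) = k)"
      using fin[OF x] by simp
  qed
  then have "card {x \<in> ?H'. card (fst x) = k}
      = card {x \<in> {x \<in> clar_covers V E. c \<in> fst x}. card (fst x) = Suc k}"
    by (rule bij_betw_same_card)
  moreover have "{x \<in> ?H'. card (fst x) = k}
      = clar_covers_sized (del_verts_V V (hex_verts c)) (del_verts_E E (hex_verts c)) k"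
    by (auto simp: clar_covers_sized_def)
  moreover have "{x \<in> {x \<in> clar_covers V E. c \<in> fst x}. card (fst x) = Suc k}
      = {x \<in> clar_covers_sized V E (Suc k). c \<in> fst x}"
    by (auto simp: clar_covers_sized_def)
  ultimately show ?thesis
    by (simp add: clar_z_eq_card)
qed

lemma clar_z_double_count:
  assumes "gen_hex_system V E"
  shows "Suc k * clar_z V E (Suc k) =
         (\<Sum>c\<in>hexagons V E. clar_z (del_verts_V V (hex_verts c)) (del_verts_E E (hex_verts c)) k)"
proof -
  have "clar_covers_sized V E (Suc k) \<subseteq> clar_covers V E"
    by (auto simp: clar_covers_sized_def)
  then have fin: "finite (hexagons V E)" "finite (clar_covers_sized V E (Suc k))"
    using assms finite_clar_covers[OF assms]
    by (auto simp: gen_hex_system_def finite_hexagons intro: finite_subset)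
  have "\<forall>x\<in>clar_covers_sized V E (Suc k). card {c \<in> hexagons V E. c \<in> fst x} = Suc k"
  proof
    fix x assume "x \<in> clar_covers_sized V E (Suc k)"
    then have "fst x \<subseteq> hexagons V E" and "card (fst x) = Suc k"
      by (auto simp: clar_covers_sized_def clar_covers_def)
    moreover from this have "{c \<in> hexagons V E. c \<in> fst x} = fst x" by blast
    ultimately show "card {c \<in> hexagons V E. c \<in> fst x} = Suc k" by simp
  qed
  then have "(\<Sum>c\<in>hexagons V E. card {x \<in> clar_covers_sized V E (Suc k). c \<in> fst x})
             = Suc k * clar_z V E (Suc k)"
    unfolding clar_z_eq_card by (rule sum_multicount[OF fin])
  then show ?thesis
    using card_clar_covers_containing_hexagon[OF assms] by simp
qed

theorem theorem4:
  assumes "gen_hex_system V E"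
  shows "fps_deriv (zeta V E) =
         (\<Sum>c\<in>hexagons V E. zeta (del_verts_V V (hex_verts c)) (del_verts_E E (hex_verts c)))"
proof (rule fps_ext)
  fix k
  have "int (Suc k * clar_z V E (Suc k)) =
        int (\<Sum>c\<in>hexagons V E. clar_z (del_verts_V V (hex_verts c)) (del_verts_E E (hex_verts c)) k)"
    using clar_z_double_count[OF assms] by (rule arg_cong)
  then show "fps_nth (fps_deriv (zeta V E)) k =
     fps_nth (\<Sum>c\<in>hexagons V E. zeta (del_verts_V V (hex_verts c)) (del_verts_E E (hex_verts c))) k"
    by (simp add: zeta_def fps_sum_nth ring_distribs)
qed

end
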